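(* Let $\alpha\in[0,1)$ and $0<a<b<1$. There exists $\mu(\alpha,a,b)>0$ such that $\int_a^b\tilde\Phi_{\alpha,m}(x)^2\,dx\ge\mu(\alpha,a,b)$ for all $m\ge1$.
   Context: Let $\nu_\alpha=\frac{1-\alpha}{2-\alpha}$, $\kappa_\alpha=\frac{2-\alpha}2$. For real $\mu$, $J_\mu$ is the Bessel function of the first kind of order $\mu$ and $0<j_{\mu,1}<j_{\mu,2}<\cdots$ its positive zeros. Let $\Phi^{(o)}_{\alpha,n}$ be the odd function on $(-1,1)$ equal to $x^{\frac{1-\alpha}2}J_{\nu_\alpha}(j_{\nu_\alpha,n}x^{\kappa_\alpha})$ for $x\in(0,1)$, and $\Phi^{(e)}_{\alpha,n}$ the even function equal to $|x|^{\frac{1-\alpha}2}J_{-\nu_\alpha}(j_{-\nu_\alpha,n}|x|^{\kappa_\alpha})$ for $x\ne0$. Define for $n\ge1$: $\tilde\Phi_{\alpha,2n-1}=\frac{\sqrt{\kappa_\alpha}}{|J'_{-\nu_\alpha}(j_{-\nu_\alpha,n})|}\Phi^{(e)}_{\alpha,n}$ and $\tilde\Phi_{\alpha,2n}=\frac{\sqrt{\kappa_\alpha}}{|J'_{\nu_\alpha}(j_{\nu_\alpha,n})|}\Phi^{(o)}_{\alpha,n}$. *)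

theory Defs
  imports "HOL-Analysis.Analysis"
begin

text \<open>Bessel function of the first kind of real order mu, for x > 0, via its power series
  J_mu(x) = sum_k (-1)^k / (k! Gamma(k+mu+1)) (x/2)^(2k+mu), with 1/Gamma = rGamma (entire).\<close>
definition bessel_J :: "real \<Rightarrow> real \<Rightarrow> real" where
  "bessel_J mu x = (\<Sum>k. (-1) ^ k * rGamma (real k + mu + 1) / fact k * (x / 2) powr (2 * real k + mu))"

definition bessel_zero :: "real \<Rightarrow> nat \<Rightarrow> real" where
  "bessel_zero mu n = (THE x. 0 < x \<and> bessel_J mu x = 0 \<and>
      card {y. 0 < y \<and> y < x \<and> bessel_J mu y = 0} = n - 1)"

definition nu_alpha :: "real \<Rightarrow> real" where
  "nu_alpha \<alpha> = (1 - \<alpha>) / (2 - \<alpha>)"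

definition kappa_alpha :: "real \<Rightarrow> real" where
  "kappa_alpha \<alpha> = (2 - \<alpha>) / 2"

definition Phi_o :: "real \<Rightarrow> nat \<Rightarrow> real \<Rightarrow> real" where
  "Phi_o \<alpha> n x =
     (let f = (\<lambda>t. t powr ((1 - \<alpha>) / 2) *
                 bessel_J (nu_alpha \<alpha>) (bessel_zero (nu_alpha \<alpha>) n * t powr kappa_alpha \<alpha>))
      in if x > 0 then f x else if x < 0 then - f (- x) else 0)"

text \<open>Even eigenfunction on (-1,1) (value at 0 irrelevant; set to 0).\<close>
definition Phi_e :: "real \<Rightarrow> nat \<Rightarrow> real \<Rightarrow> real" where
  "Phi_e \<alpha> n x =
     (if x = 0 then 0 else
        \<bar>x\<bar> powr ((1 - \<alpha>) / 2) *
        bessel_J (- nu_alpha \<alpha>) (bessel_zero (- nu_alpha \<alpha>) n * \<bar>x\<bar> powr kappa_alpha \<alpha>))"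

text \<open>Normalized eigenfunctions: index 2n-1 is even, index 2n is odd (n \<ge> 1).\<close>
definition Phi_tilde :: "real \<Rightarrow> nat \<Rightarrow> real \<Rightarrow> real" where
  "Phi_tilde \<alpha> m x =
     (if odd m then
        (let n = (m + 1) div 2; mu = - nu_alpha \<alpha> in
          sqrt (kappa_alpha \<alpha>) / \<bar>deriv (bessel_J mu) (bessel_zero mu n)\<bar> * Phi_e \<alpha> n x)
      else
        (let n = m div 2; mu = nu_alpha \<alpha> in
          sqrt (kappa_alpha \<alpha>) / \<bar>deriv (bessel_J mu) (bessel_zero mu n)\<bar> * Phi_o \<alpha> n x))"

end

theory Submission
  imports Defs
begin

text \<open>
  On \<open>(0, 1)\<close> each \<open>\<Phi>\<^sub>m\<close> is a multiple \<open>C w\<close> of \<open>w(x) = x\<^sup>\<beta> J\<^sub>\<mu>(j x\<^sup>\<kappa>)\<close>,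
  with \<open>\<beta> = (1 - \<alpha>)/2\<close>, \<open>\<mu> = \<plusminus>\<nu>\<^sub>\<alpha>\<close> and \<open>j = j\<^sub>\<mu>\<^sub>,\<^sub>n\<close>. With \<open>v = x\<^sup>\<alpha> w'\<close> one has
  \<open>v' = -(\<kappa> j)\<^sup>2 w\<close> and \<open>w(1) = 0\<close>. The energy \<open>v\<^sup>2/x\<^sup>\<alpha> + (\<kappa> j)\<^sup>2 w\<^sup>2\<close> decreases on
  \<open>(0, 1]\<close>, so it is at least \<open>v(1)\<^sup>2\<close>; integrating \<open>(w v)' = v\<^sup>2/x\<^sup>\<alpha> - (\<kappa> j)\<^sup>2 w\<^sup>2\<close>
  over \<open>[a, b]\<close> gives \<open>2 (\<kappa> j)\<^sup>2 \<integral> w\<^sup>2 \<ge> v(1)\<^sup>2 (b - a)\<close> up to boundary terms, which the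
  increasing energy \<open>v\<^sup>2 + (\<kappa> j)\<^sup>2 x\<^sup>\<alpha> w\<^sup>2\<close> bounds by \<open>v(1)\<^sup>2/(\<kappa> j \<surd>(a\<^sup>\<alpha>))\<close>.
  The normalisation turns this into \<open>\<integral> \<Phi>\<^sub>m\<^sup>2 \<ge> \<kappa>/2 (b - a - 1/(\<kappa> j \<surd>(a\<^sup>\<alpha>)))\<close>, which is
  at least \<open>\<kappa> (b - a)/4\<close> once \<open>j\<close> is large. As \<open>j\<^sub>\<mu>\<^sub>,\<^sub>n \<rightarrow> \<infinity>\<close> and every integral is
  positive, a minimum over finitely many \<open>m\<close> finishes the proof.

  The facts about \<open>J\<^sub>\<mu>\<close>, \<open>|\<mu>| \<le> 1/2\<close>, that this needs (its zeros are simple, locally finite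
  and there is one in every interval of length \<open>\<pi>\<close>) come from the Liouville form
  \<open>u = \<surd>s J\<^sub>\<mu>\<close>, \<open>u'' + (1 + (1/4 - \<mu>\<^sup>2)/s\<^sup>2) u = 0\<close>: by an energy argument and by Sturm
  comparison with \<open>sin\<close>.
\<close>

section \<open>The power series behind \<open>J\<^sub>\<mu>\<close>\<close>

definition bessel_coeff :: "real \<Rightarrow> nat \<Rightarrow> real" where
  "bessel_coeff mu k = (-1) ^ k * rGamma (real k + mu + 1) / fact k"

definition bessel_series :: "real \<Rightarrow> real \<Rightarrow> real" where
  "bessel_series mu y = (\<Sum>k. bessel_coeff mu k * y ^ k)"

lemma bessel_coeff_Suc:
  assumes "mu > -1"
  shows "bessel_coeff mu (Suc k) = - bessel_coeff mu k / ((real k + mu + 1) * (real k + 1))"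
proof -
  have "real k + mu + 1 \<noteq> 0" using assms by linarith
  then have "rGamma (real (Suc k) + mu + 1) = rGamma (real k + mu + 1) / (real k + mu + 1)"
    using rGamma_plus1[of "real k + mu + 1"] by (simp add: field_simps add_ac)
  then show ?thesis unfolding bessel_coeff_def by (simp add: field_simps)
qed

lemma summable_bessel_series:
  assumes "mu > -1"
  shows "summable (\<lambda>k. bessel_coeff mu k * y ^ k)"
proof (rule summable_ratio_test[where c = "1/2" and N = "nat \<lceil>2 * \<bar>y\<bar>\<rceil> + 1"])
  fix n assume "n \<ge> nat \<lceil>2 * \<bar>y\<bar>\<rceil> + 1"
  then have n: "real n \<ge> 2 * \<bar>y\<bar>" "real n \<ge> 1" by linarith+
  have "2 * \<bar>y\<bar> \<le> 1 * (real n + 1)" using n by simp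
  also have "\<dots> \<le> (real n + mu + 1) * (real n + 1)"
    using assms n by (intro mult_right_mono) linarith+
  finally have ratio: "\<bar>y\<bar> / ((real n + mu + 1) * (real n + 1)) \<le> 1/2"
    using assms n by (simp add: divide_le_eq)
  have "\<bar>(real n + mu + 1) * (real n + 1)\<bar> = (real n + mu + 1) * (real n + 1)"
    using assms by (intro abs_of_nonneg) simp
  have "norm (bessel_coeff mu (Suc n) * y ^ Suc n)
      = \<bar>bessel_coeff mu n * y ^ n\<bar> * (\<bar>y\<bar> / ((real n + mu + 1) * (real n + 1)))"
    using assms n \<open>\<bar>(real n + mu + 1) * (real n + 1)\<bar> = _\<close>
    by (simp add: bessel_coeff_Suc abs_mult abs_divide power_abs field_simps)
  also have "\<dots> \<le> 1/2 * norm (bessel_coeff mu n * y ^ n)"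
    using mult_left_mono[OF ratio abs_ge_zero] by simp
  finally show "norm (bessel_coeff mu (Suc n) * y ^ Suc n) \<le> 1/2 * norm (bessel_coeff mu n * y ^ n)" .
qed simp

lemma powser_everywhere_deriv:
  fixes c :: "nat \<Rightarrow> real"
  assumes "\<And>y. summable (\<lambda>k. c k * y ^ k)"
  shows "deriv (\<lambda>y. \<Sum>k. c k * y ^ k) = (\<lambda>y. \<Sum>k. diffs c k * y ^ k)"
    and "summable (\<lambda>k. diffs c k * y ^ k)"
  using termdiffs_strong_converges_everywhere[OF assms] termdiff_converges_all[OF assms]
  by (auto intro: DERIV_imp_deriv)

lemma bessel_series_derivs:
  assumes "mu > -1"
  shows "deriv (bessel_series mu) = (\<lambda>y. \<Sum>k. diffs (bessel_coeff mu) k * y ^ k)"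
    and "deriv (deriv (bessel_series mu)) = (\<lambda>y. \<Sum>k. diffs (diffs (bessel_coeff mu)) k * y ^ k)"
    and "(bessel_series mu has_real_derivative deriv (bessel_series mu) y) (at y)"
    and "(deriv (bessel_series mu) has_real_derivative deriv (deriv (bessel_series mu)) y) (at y)"
proof -
  note s0 = summable_bessel_series[OF assms]
  note s1 = powser_everywhere_deriv(2)[OF s0]
  have G: "bessel_series mu = (\<lambda>y. \<Sum>k. bessel_coeff mu k * y ^ k)"
    by (simp add: bessel_series_def fun_eq_iff)
  show G': "deriv (bessel_series mu) = (\<lambda>y. \<Sum>k. diffs (bessel_coeff mu) k * y ^ k)"
    unfolding G by (rule powser_everywhere_deriv(1)[OF s0])
  show G'': "deriv (deriv (bessel_series mu)) = (\<lambda>y. \<Sum>k. diffs (diffs (bessel_coeff mu)) k * y ^ k)"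
    unfolding G' by (rule powser_everywhere_deriv(1)[OF s1])
  show "(bessel_series mu has_real_derivative deriv (bessel_series mu) y) (at y)"
    unfolding G' unfolding G by (rule termdiffs_strong_converges_everywhere[OF s0])
  show "(deriv (bessel_series mu) has_real_derivative deriv (deriv (bessel_series mu)) y) (at y)"
    unfolding G'' unfolding G'
    by (rule termdiffs_strong_converges_everywhere[OF s1])
qed

lemma bessel_series_0: "bessel_series mu 0 = rGamma (mu + 1)"
  unfolding bessel_series_def using powser_zero[of "bessel_coeff mu"] by (simp add: bessel_coeff_def)

lemma bessel_series_ode:
  assumes "mu > -1"
  shows "y * deriv (deriv (bessel_series mu)) y + (mu + 1) * deriv (bessel_series mu) y
           + bessel_series mu y = 0"
proof -
  define c where "c = bessel_coeff mu"
  define g where "g = (\<lambda>k. real k * diffs c k * y ^ k)"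
  have s0: "summable (\<lambda>k. c k * y ^ k)" unfolding c_def by (rule summable_bessel_series[OF assms])
  have s1: "summable (\<lambda>k. diffs c k * y ^ k)" for y
    unfolding c_def by (rule powser_everywhere_deriv(2)[OF summable_bessel_series[OF assms]])
  have s2: "summable (\<lambda>k. diffs (diffs c) k * y ^ k)"
    by (rule powser_everywhere_deriv(2)[OF s1])
  have shift: "(\<lambda>k. y * (diffs (diffs c) k * y ^ k)) = (\<lambda>k. g (Suc k))"
    by (auto simp: g_def diffs_def field_simps)
  have sg: "summable g"
    using summable_mult[OF s2, of y] unfolding shift summable_Suc_iff .
  have "y * (\<Sum>k. diffs (diffs c) k * y ^ k) = (\<Sum>k. g (Suc k))"
    using suminf_mult[OF s2, of y] unfolding shift by simp
  also have "\<dots> = suminf g"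
    using suminf_split_head[OF sg] by (simp add: g_def)
  finally have second: "y * (\<Sum>k. diffs (diffs c) k * y ^ k) = suminf g" .
  have coeff: "g k + (mu + 1) * (diffs c k * y ^ k) + c k * y ^ k = 0" for k
  proof -
    have "(real k + mu + 1) * (real k + 1) \<noteq> 0" using assms by (simp add: add_pos_pos)
    moreover have "g k + (mu + 1) * (diffs c k * y ^ k)
        = (real k + mu + 1) * (real k + 1) * c (Suc k) * y ^ k"
      unfolding g_def diffs_def by (simp add: algebra_simps)
    ultimately show ?thesis unfolding c_def bessel_coeff_Suc[OF assms] by simp
  qed
  have "(\<lambda>k. g k + (mu + 1) * (diffs c k * y ^ k) + c k * y ^ k) sums
        (suminf g + (mu + 1) * (\<Sum>k. diffs c k * y ^ k) + (\<Sum>k. c k * y ^ k))"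
    by (intro sums_add sums_mult summable_sums sg s1 s0)
  then have "suminf g + (mu + 1) * (\<Sum>k. diffs c k * y ^ k) + (\<Sum>k. c k * y ^ k) = 0"
    unfolding coeff using sums_unique2[OF _ sums_zero] by metis
  then show ?thesis
    using second unfolding bessel_series_derivs(2)[OF assms]
    unfolding bessel_series_derivs(1)[OF assms] bessel_series_def c_def by simp
qed

section \<open>Bessel's equation on \<open>(0, \<infinity>)\<close>\<close>

lemma bessel_J_eq_series:
  assumes "mu > -1" "s > 0"
  shows "bessel_J mu s = (s/2) powr mu * bessel_series mu ((s/2)^2)"
proof -
  have "(s/2) powr (2 * real k + mu) = (s/2) powr mu * ((s/2)^2) ^ k" for k
  proof -
    have "(s/2) powr (2 * real k + mu) = (s/2) powr (real (2 * k)) * (s/2) powr mu"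
      by (simp add: powr_add)
    also have "(s/2) powr (real (2 * k)) = (s/2) ^ (2 * k)"
      by (rule powr_realpow) (use assms(2) in simp)
    also have "\<dots> = ((s/2)^2) ^ k"
      by (simp add: power_mult)
    finally show ?thesis by simp
  qed
  then have "bessel_J mu s = (\<Sum>k. (s/2) powr mu * (bessel_coeff mu k * ((s/2)^2) ^ k))"
    unfolding bessel_J_def bessel_coeff_def by (simp add: mult_ac)
  then show ?thesis
    unfolding bessel_series_def using suminf_mult[OF summable_bessel_series[OF assms(1)]] by simp
qed

lemma has_real_derivative_half_powr:
  assumes "s > 0"
  shows "((\<lambda>s. (s/2) powr mu) has_real_derivative mu / s * (s/2) powr mu) (at s)"
proof -
  have "((\<lambda>s. (s/2) powr mu) has_real_derivative mu * (s/2) powr (mu - 1) * (1/2)) (at s)"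
    using assms by (auto intro!: derivative_eq_intros)
  moreover have "mu * (s/2) powr (mu - 1) * (1/2) = mu / s * (s/2) powr mu"
    using assms by (simp add: powr_diff field_simps)
  ultimately show ?thesis by simp
qed

lemma has_real_derivative_bessel_series_half_square:
  assumes "mu > -1"
  shows "((\<lambda>s. bessel_series mu ((s/2)^2)) has_real_derivative
           deriv (bessel_series mu) ((s/2)^2) * (s/2)) (at s)"
    and "((\<lambda>s. deriv (bessel_series mu) ((s/2)^2)) has_real_derivative
           deriv (deriv (bessel_series mu)) ((s/2)^2) * (s/2)) (at s)"
proof -
  have sq: "((\<lambda>s. (s/2)^2) has_real_derivative s/2) (at s)"
    by (auto intro!: derivative_eq_intros simp: field_simps)
  show "((\<lambda>s. bessel_series mu ((s/2)^2)) has_real_derivative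
           deriv (bessel_series mu) ((s/2)^2) * (s/2)) (at s)"
    by (rule DERIV_chain2[OF bessel_series_derivs(3)[OF assms] sq])
  show "((\<lambda>s. deriv (bessel_series mu) ((s/2)^2)) has_real_derivative
           deriv (deriv (bessel_series mu)) ((s/2)^2) * (s/2)) (at s)"
    by (rule DERIV_chain2[OF bessel_series_derivs(4)[OF assms] sq])
qed

lemma has_real_derivative_transform_pos:
  fixes f g :: "real \<Rightarrow> real"
  assumes "(f has_real_derivative D) (at s)" "s > 0" "\<And>x. x > 0 \<Longrightarrow> f x = g x"
  shows "(g has_real_derivative D) (at s)"
  by (rule has_field_derivative_transform_within_open[OF assms(1), of "{0<..}"]) (use assms in auto)

lemma bessel_J_has_derivative_series:
  assumes "mu > -1" "s > 0"
  shows "(bessel_J mu has_real_derivative (s/2) powr mu *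
           (mu * bessel_series mu ((s/2)^2) + 2 * (s/2)^2 * deriv (bessel_series mu) ((s/2)^2)) / s)
         (at s)"
proof (rule has_real_derivative_transform_pos[OF _ assms(2)])
  have "((\<lambda>s. (s/2) powr mu * bessel_series mu ((s/2)^2)) has_real_derivative
      mu / s * (s/2) powr mu * bessel_series mu ((s/2)^2)
      + (s/2) powr mu * (deriv (bessel_series mu) ((s/2)^2) * (s/2))) (at s)"
    by (rule DERIV_cong[OF DERIV_mult[OF has_real_derivative_half_powr[OF assms(2), of mu]
          has_real_derivative_bessel_series_half_square(1)[OF assms(1)]]]) simp
  also have "mu / s * (s/2) powr mu * bessel_series mu ((s/2)^2)
      + (s/2) powr mu * (deriv (bessel_series mu) ((s/2)^2) * (s/2))
      = (s/2) powr mu *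
           (mu * bessel_series mu ((s/2)^2) + 2 * (s/2)^2 * deriv (bessel_series mu) ((s/2)^2)) / s"
    using assms(2) by (simp add: field_simps power2_eq_square)
  finally show "((\<lambda>s. (s/2) powr mu * bessel_series mu ((s/2)^2)) has_real_derivative
      (s/2) powr mu *
           (mu * bessel_series mu ((s/2)^2) + 2 * (s/2)^2 * deriv (bessel_series mu) ((s/2)^2)) / s)
      (at s)" .
qed (simp add: bessel_J_eq_series[OF assms(1)])

lemma has_real_derivative_bessel_J:
  assumes "mu > -1" "s > 0"
  shows "(bessel_J mu has_real_derivative deriv (bessel_J mu) s) (at s)"
proof -
  note d = bessel_J_has_derivative_series[OF assms]
  show ?thesis using d unfolding DERIV_imp_deriv[OF d] .
qed

lemma deriv_bessel_J_series:
  assumes "mu > -1" "s > 0"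
  shows "s * deriv (bessel_J mu) s = (s/2) powr mu *
           (mu * bessel_series mu ((s/2)^2) + 2 * (s/2)^2 * deriv (bessel_series mu) ((s/2)^2))"
  using DERIV_imp_deriv[OF bessel_J_has_derivative_series[OF assms]] assms(2) by simp

lemma bessel_equation:
  assumes "mu > -1" "s > 0"
  shows "((\<lambda>s. s * deriv (bessel_J mu) s) has_real_derivative (mu^2 / s - s) * bessel_J mu s) (at s)"
proof -
  define G where "G = bessel_series mu"
  define y where "y = (s/2)^2"
  note dG = has_real_derivative_bessel_series_half_square[OF assms(1), folded G_def]
  have sq: "((\<lambda>s. 2 * (s/2)^2) has_real_derivative s) (at s)"
    by (auto intro!: derivative_eq_intros simp: field_simps)
  have dQ: "((\<lambda>s. mu * G ((s/2)^2) + 2 * (s/2)^2 * deriv G ((s/2)^2)) has_real_derivative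
      mu * (deriv G y * (s/2)) + (s * deriv G y + 2 * y * (deriv (deriv G) y * (s/2)))) (at s)"
    unfolding y_def by (intro DERIV_add DERIV_cmult dG(1) DERIV_cong[OF DERIV_mult[OF sq dG(2)]]) simp_all
  have dP: "((\<lambda>s. (s/2) powr mu * (mu * G ((s/2)^2) + 2 * (s/2)^2 * deriv G ((s/2)^2)))
      has_real_derivative mu / s * (s/2) powr mu * (mu * G y + 2 * y * deriv G y)
        + (s/2) powr mu * (mu * (deriv G y * (s/2))
             + (s * deriv G y + 2 * y * (deriv (deriv G) y * (s/2))))) (at s)"
    by (rule DERIV_cong[OF DERIV_mult[OF has_real_derivative_half_powr[OF assms(2), of mu] dQ]])
       (simp add: y_def)
  have J: "bessel_J mu s = (s/2) powr mu * G y"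
    unfolding G_def y_def by (rule bessel_J_eq_series[OF assms])
  have ode: "y * deriv (deriv G) y = - (mu + 1) * deriv G y - G y"
    using bessel_series_ode[OF assms(1), of y] unfolding G_def by linarith
  have "2 * y * (deriv (deriv G) y * (s/2)) = s * (y * deriv (deriv G) y)" by simp
  also have "\<dots> = s * (- (mu + 1) * deriv G y - G y)" unfolding ode ..
  finally have second_order:
    "2 * y * (deriv (deriv G) y * (s/2)) = s * (- (mu + 1) * deriv G y - G y)" .
  have "mu / s * p * (mu * a + 2 * y * b) + p * (mu * (b * (s/2)) + (s * b + s * (- (mu + 1) * b - a)))
      = (mu^2 / s - s) * (p * a)" for p a b
    using assms(2) by (simp add: y_def field_simps power2_eq_square)
  then have "mu / s * (s/2) powr mu * (mu * G y + 2 * y * deriv G y)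
        + (s/2) powr mu * (mu * (deriv G y * (s/2))
             + (s * deriv G y + 2 * y * (deriv (deriv G) y * (s/2))))
      = (mu^2 / s - s) * bessel_J mu s"
    unfolding second_order J .
  then have P: "((\<lambda>s. (s/2) powr mu * (mu * G ((s/2)^2) + 2 * (s/2)^2 * deriv G ((s/2)^2)))
      has_real_derivative (mu^2 / s - s) * bessel_J mu s) (at s)"
    using dP by simp
  show ?thesis
    by (rule has_real_derivative_transform_pos[OF P assms(2)])
       (simp add: deriv_bessel_J_series[OF assms(1)] G_def)
qed

section \<open>Zeros of \<open>J\<^sub>\<mu>\<close> for \<open>\<bar>\<mu>\<bar> \<le> 1/2\<close>\<close>

lemma DERIV_eventually_nonzero:
  fixes f :: "real \<Rightarrow> real"
  assumes "(f has_real_derivative D) (at p)" "f p \<noteq> 0 \<or> D \<noteq> 0"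
  shows "eventually (\<lambda>y. f y \<noteq> 0) (at p)"
proof (cases "f p = 0")
  case False
  have "(f \<longlongrightarrow> f p) (at p)"
    using DERIV_isCont[OF assms(1)] by (simp add: isCont_def)
  then show ?thesis using False by (rule tendsto_imp_eventually_ne)
next
  case True
  have "((\<lambda>y. (f y - f p) / (y - p)) \<longlongrightarrow> D) (at p)"
    using assms(1) by (simp add: has_field_derivative_iff)
  then have "eventually (\<lambda>y. (f y - f p) / (y - p) \<noteq> 0) (at p)"
    using assms(2) True by (intro tendsto_imp_eventually_ne) auto
  then show ?thesis by eventually_elim (use True in auto)
qed

text \<open>The energy \<open>r\<^sup>2/q + u\<^sup>2\<close> of \<open>u'' + q u = 0\<close> does not decrease when \<open>q\<close> decreases.\<close>

lemma oscillation_no_double_zero: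
  fixes u r q q' :: "real \<Rightarrow> real"
  assumes "t \<le> s" "u t \<noteq> 0"
    and u': "\<And>x. x \<in> {t..s} \<Longrightarrow> (u has_real_derivative r x) (at x)"
    and r': "\<And>x. x \<in> {t..s} \<Longrightarrow> (r has_real_derivative - q x * u x) (at x)"
    and q': "\<And>x. x \<in> {t..s} \<Longrightarrow> (q has_real_derivative q' x) (at x)"
    and q_pos: "\<And>x. x \<in> {t..s} \<Longrightarrow> q x > 0"
    and q'_nonpos: "\<And>x. x \<in> {t..s} \<Longrightarrow> q' x \<le> 0"
  shows "u s \<noteq> 0 \<or> r s \<noteq> 0"
proof -
  define E where "E = (\<lambda>x. (r x)^2 / q x + (u x)^2)"
  have "E t \<le> E s"
  proof (rule DERIV_nonneg_imp_nondecreasing[OF assms(1)])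
    fix x assume "t \<le> x" "x \<le> s"
    then have x: "x \<in> {t..s}" by simp
    have "((2 * (- q x * u x * r x)) * q x - (r x)^2 * q' x) / (q x * q x) + 2 * (r x * u x)
        = - q' x * (r x)^2 / (q x)^2"
      using q_pos[OF x] by (simp add: field_simps power2_eq_square)
    then have "(E has_real_derivative - q' x * (r x)^2 / (q x)^2) (at x)"
      unfolding E_def using q_pos[OF x]
      by (intro DERIV_cong[OF DERIV_add[OF DERIV_divide[OF DERIV_power[OF r'[OF x]] q'[OF x]]
            DERIV_power[OF u'[OF x]]]]) (simp_all add: mult_ac)
    moreover have "- q' x * (r x)^2 / (q x)^2 \<ge> 0"
      using q'_nonpos[OF x] by (intro divide_nonneg_nonneg mult_nonneg_nonneg) auto
    ultimately show "\<exists>y. (E has_real_derivative y) (at x) \<and> 0 \<le> y" by blast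
  qed
  moreover have "E t > 0"
    unfolding E_def using assms(2) q_pos[of t] assms(1) by (simp add: add_nonneg_pos)
  ultimately show ?thesis unfolding E_def by auto
qed

text \<open>Sturm comparison of \<open>u'' + q u = 0\<close>, \<open>q \<ge> 1\<close>, with \<open>sin (x - A)\<close>.\<close>

lemma sturm_no_positive_solution:
  fixes u r q :: "real \<Rightarrow> real"
  assumes u': "\<And>x. x \<in> {A..A+pi} \<Longrightarrow> (u has_real_derivative r x) (at x)"
    and r': "\<And>x. x \<in> {A..A+pi} \<Longrightarrow> (r has_real_derivative - q x * u x) (at x)"
    and q: "\<And>x. x \<in> {A..A+pi} \<Longrightarrow> 1 \<le> q x"
    and pos: "\<And>x. x \<in> {A..A+pi} \<Longrightarrow> 0 < u x"
  shows False
proof -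
  define W where "W = (\<lambda>x. r x * sin (x - A) - u x * cos (x - A))"
  have "W (A + pi) \<le> W A"
  proof (rule DERIV_nonpos_imp_nonincreasing[of A "A + pi" W])
    fix x assume "A \<le> x" "x \<le> A + pi"
    then have x: "x \<in> {A..A+pi}" by simp
    have sin: "((\<lambda>x. sin (x - A)) has_real_derivative cos (x - A)) (at x)"
      and cos: "((\<lambda>x. cos (x - A)) has_real_derivative - sin (x - A)) (at x)"
      by (auto intro!: derivative_eq_intros)
    have "(W has_real_derivative (1 - q x) * u x * sin (x - A)) (at x)"
      unfolding W_def
      by (rule DERIV_cong[OF DERIV_diff[OF DERIV_mult[OF r'[OF x] sin] DERIV_mult[OF u'[OF x] cos]]])
         (simp add: algebra_simps)
    moreover have "(1 - q x) * u x * sin (x - A) \<le> 0"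
      using q[OF x] pos[OF x] sin_ge_zero[of "x - A"] x
      by (intro mult_nonpos_nonneg mult_nonpos_nonneg) auto
    ultimately show "\<exists>y. (W has_real_derivative y) (at x) \<and> y \<le> 0" by blast
  qed (simp add: pi_ge_zero)
  then show False
    unfolding W_def using pos[of A] pos[of "A + pi"] pi_ge_zero by simp
qed

lemma sturm_zero_in_pi_interval:
  fixes u r q :: "real \<Rightarrow> real"
  assumes u': "\<And>x. x \<in> {A..A+pi} \<Longrightarrow> (u has_real_derivative r x) (at x)"
    and r': "\<And>x. x \<in> {A..A+pi} \<Longrightarrow> (r has_real_derivative - q x * u x) (at x)"
    and q: "\<And>x. x \<in> {A..A+pi} \<Longrightarrow> 1 \<le> q x"
  shows "\<exists>x\<in>{A..A+pi}. u x = 0"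
proof (rule ccontr)
  assume no_zero: "\<not> (\<exists>x\<in>{A..A+pi}. u x = 0)"
  have cont: "continuous_on {A..x} u" if "x \<le> A + pi" for x
    using that by (intro continuous_at_imp_continuous_on ballI DERIV_isCont[OF u']) auto
  have A: "A \<in> {A..A+pi}" using pi_ge_zero by simp
  consider "0 < u A" | "u A < 0" using no_zero A by force
  then show False
  proof cases
    case 1
    have "0 < u x" if x: "x \<in> {A..A+pi}" for x
      using IVT2'[of u x 0 A, OF _ _ _ cont] no_zero x 1 by force
    with u' r' q show False by (rule sturm_no_positive_solution)
  next
    case 2
    have "0 < - u x" if x: "x \<in> {A..A+pi}" for x
      using IVT'[of u A 0 x, OF _ _ _ cont] no_zero x 2 by force
    moreover have "((\<lambda>x. - u x) has_real_derivative - r x) (at x)"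
      and "((\<lambda>x. - r x) has_real_derivative - q x * - u x) (at x)" if "x \<in> {A..A+pi}" for x
      using DERIV_minus[OF u'[OF that]] DERIV_minus[OF r'[OF that]] by simp_all
    ultimately show False using q by (rule sturm_no_positive_solution[rotated -1])
  qed
qed

lemma half_bounded_order:
  fixes mu :: real
  assumes "\<bar>mu\<bar> \<le> 1/2"
  shows "mu > -1" "mu^2 \<le> 1/4"
proof -
  show "mu > -1" using assms by linarith
  have "\<bar>mu\<bar>^2 \<le> (1/2)^2" using assms by (intro power_mono) auto
  then show "mu^2 \<le> 1/4" by (simp add: power2_eq_square)
qed

lemma bessel_liouville_normal_form:
  assumes "mu > -1" "s > 0"
  shows "((\<lambda>s. sqrt s * bessel_J mu s) has_real_derivative
            (bessel_J mu s / 2 + s * deriv (bessel_J mu) s) / sqrt s) (at s)"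
    and "((\<lambda>s. (bessel_J mu s / 2 + s * deriv (bessel_J mu) s) / sqrt s) has_real_derivative
            - (1 + (1/4 - mu^2) / s^2) * (sqrt s * bessel_J mu s)) (at s)"
proof -
  define J where "J = bessel_J mu s"
  define P where "P = s * deriv (bessel_J mu) s"
  note dJ = has_real_derivative_bessel_J[OF assms]
  have st: "sqrt s > 0" "sqrt s * sqrt s = s" using assms(2) by simp_all
  show "((\<lambda>s. sqrt s * bessel_J mu s) has_real_derivative
            (bessel_J mu s / 2 + s * deriv (bessel_J mu) s) / sqrt s) (at s)"
    using st by (intro DERIV_cong[OF DERIV_mult[OF DERIV_real_sqrt[OF assms(2)] dJ]])
      (simp add: field_simps)
  have "((\<lambda>s. bessel_J mu s / 2 + s * deriv (bessel_J mu) s) has_real_derivative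
        P / s / 2 + (mu^2 / s - s) * J) (at s)"
    using assms(2) unfolding P_def J_def
    by (intro DERIV_cong[OF DERIV_add[OF DERIV_cdivide[OF dJ] bessel_equation[OF assms]]]) simp
  moreover have "((P / s / 2 + (mu^2 / s - s) * J) * sqrt s - (J / 2 + P) * (inverse (sqrt s) / 2))
      / (sqrt s * sqrt s) = - (1 + (1/4 - mu^2) / s^2) * (sqrt s * J)"
  proof -
    have "((P / (t*t) / 2 + (mu^2 / (t*t) - t*t) * J) * t - (J / 2 + P) * (inverse t / 2)) / (t*t)
        = - (1 + (1/4 - mu^2) / (t*t)^2) * (t * J)" if "t > 0" for t
      using that by (simp add: field_simps power2_eq_square)
    from this[OF st(1)] show ?thesis unfolding st(2) .
  qed
  ultimately show "((\<lambda>s. (bessel_J mu s / 2 + s * deriv (bessel_J mu) s) / sqrt s) has_real_derivative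
            - (1 + (1/4 - mu^2) / s^2) * (sqrt s * bessel_J mu s)) (at s)"
    unfolding J_def P_def using st
    by (intro DERIV_cong[OF DERIV_divide[OF _ DERIV_real_sqrt[OF assms(2)]]]) auto
qed

lemma bessel_J_eventually_nonzero_at_0:
  assumes "mu > -1"
  shows "eventually (\<lambda>s. bessel_J mu s \<noteq> 0) (at_right 0)"
proof -
  have "bessel_series mu 0 \<noteq> 0"
  proof
    assume "bessel_series mu 0 = 0"
    then have "mu + 1 \<in> \<int>\<^sub>\<le>\<^sub>0" by (simp add: bessel_series_0 rGamma_eq_zero_iff)
    then show False using nonpos_Ints_nonpos assms by fastforce
  qed
  moreover have "((\<lambda>s. bessel_series mu ((s/2)^2)) \<longlongrightarrow> bessel_series mu 0) (at_right 0)"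
    using DERIV_isCont[OF bessel_series_derivs(3)[OF assms]]
    by (intro isCont_tendsto_compose[where g = "bessel_series mu"]) (auto intro!: tendsto_eq_intros)
  ultimately have "eventually (\<lambda>s. bessel_series mu ((s/2)^2) \<noteq> 0) (at_right 0)"
    by (intro tendsto_imp_eventually_ne) auto
  then show ?thesis using eventually_at_right_less[of 0]
    by eventually_elim (simp add: bessel_J_eq_series[OF assms])
qed

lemma bessel_J_zero_imp_deriv_nonzero:
  assumes "\<bar>mu\<bar> \<le> 1/2" "s > 0" "bessel_J mu s = 0"
  shows "deriv (bessel_J mu) s \<noteq> 0"
proof -
  note mu = half_bounded_order[OF assms(1)]
  have "eventually (\<lambda>t. t < s) (at_right 0)"
    using assms(2) by (auto simp: eventually_at_right_field)
  then have "eventually (\<lambda>t. t < s \<and> bessel_J mu t \<noteq> 0 \<and> 0 < t) (at_right 0)"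
    using bessel_J_eventually_nonzero_at_0[OF mu(1)] eventually_at_right_less[of 0]
    by (auto intro: eventually_conj)
  then obtain t where t: "0 < t" "t < s" "bessel_J mu t \<noteq> 0"
    using eventually_happens'[of "at_right (0::real)"] by force
  let ?u = "\<lambda>s. sqrt s * bessel_J mu s"
  let ?r = "\<lambda>s. (bessel_J mu s / 2 + s * deriv (bessel_J mu) s) / sqrt s"
  have "?u s \<noteq> 0 \<or> ?r s \<noteq> 0"
  proof (rule oscillation_no_double_zero[where t = t and u = ?u and r = ?r
        and q = "\<lambda>x. 1 + (1/4 - mu^2) / x^2" and q' = "\<lambda>x. - 2 * (1/4 - mu^2) / x^3"])
    fix x assume "x \<in> {t..s}"
    then have x: "x > 0" using t by simp
    show "(?u has_real_derivative ?r x) (at x)" "(?r has_real_derivative - (1 + (1/4 - mu^2) / x^2) * ?u x) (at x)"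
      by (fact bessel_liouville_normal_form[OF mu(1) x])+
    show "((\<lambda>x. 1 + (1/4 - mu^2) / x^2) has_real_derivative - 2 * (1/4 - mu^2) / x^3) (at x)"
      using x by (auto intro!: derivative_eq_intros simp: field_simps power2_eq_square power3_eq_cube)
    show "0 < 1 + (1/4 - mu^2) / x^2" "- 2 * (1/4 - mu^2) / x^3 \<le> 0"
      using mu(2) x by (auto intro!: add_pos_nonneg divide_nonpos_pos)
  qed (use t in auto)
  then show ?thesis using assms by auto
qed

lemma bessel_J_eventually_nonzero:
  assumes "\<bar>mu\<bar> \<le> 1/2" "p > 0"
  shows "eventually (\<lambda>s. bessel_J mu s \<noteq> 0) (at p)"
  using has_real_derivative_bessel_J[OF half_bounded_order(1)[OF assms(1)] assms(2)]
    bessel_J_zero_imp_deriv_nonzero[OF assms]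
  by (intro DERIV_eventually_nonzero) auto

lemma finite_bessel_J_zeros:
  assumes "\<bar>mu\<bar> \<le> 1/2"
  shows "finite {s. 0 < s \<and> s \<le> X \<and> bessel_J mu s = 0}"
proof -
  obtain \<delta> where \<delta>: "\<delta> > 0" "\<And>s. 0 < s \<Longrightarrow> s < \<delta> \<Longrightarrow> bessel_J mu s \<noteq> 0"
    using bessel_J_eventually_nonzero_at_0[OF half_bounded_order(1)[OF assms]]
    by (auto simp: eventually_at_right_field)
  define Z where "Z = {s. 0 < s \<and> bessel_J mu s = 0}"
  have "\<not> p islimpt Z" if "p \<in> {\<delta>..X}" for p
    using bessel_J_eventually_nonzero[OF assms, of p] that \<delta>(1)
    unfolding islimpt_iff_eventually Z_def by (auto elim: eventually_mono)
  then have "finite ({\<delta>..X} \<inter> Z)"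
    by (intro finite_not_islimpt_in_compact) auto
  moreover have "{s. 0 < s \<and> s \<le> X \<and> bessel_J mu s = 0} \<subseteq> {\<delta>..X} \<inter> Z"
    using \<delta>(2) unfolding Z_def by (force simp: not_less[symmetric])
  ultimately show ?thesis by (rule finite_subset[rotated])
qed

lemma bessel_J_zero_in_pi_interval:
  assumes "\<bar>mu\<bar> \<le> 1/2" "A > 0"
  shows "\<exists>s\<in>{A..A+pi}. bessel_J mu s = 0"
proof -
  note mu = half_bounded_order[OF assms(1)]
  have "\<exists>s\<in>{A..A+pi}. sqrt s * bessel_J mu s = 0"
  proof (rule sturm_zero_in_pi_interval[where r = "\<lambda>s. (bessel_J mu s / 2 + s * deriv (bessel_J mu) s) / sqrt s"
        and q = "\<lambda>x. 1 + (1/4 - mu^2) / x^2"])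
    fix x assume "x \<in> {A..A+pi}"
    then have x: "x > 0" using assms(2) by simp
    show "((\<lambda>s. sqrt s * bessel_J mu s) has_real_derivative
        (bessel_J mu x / 2 + x * deriv (bessel_J mu) x) / sqrt x) (at x)"
      and "((\<lambda>s. (bessel_J mu s / 2 + s * deriv (bessel_J mu) s) / sqrt s) has_real_derivative
        - (1 + (1/4 - mu^2) / x^2) * (sqrt x * bessel_J mu x)) (at x)"
      by (fact bessel_liouville_normal_form[OF mu(1) x])+
    show "1 \<le> 1 + (1/4 - mu^2) / x^2" using mu(2) by simp
  qed
  then show ?thesis using assms(2) by auto
qed

section \<open>The enumeration of the positive zeros\<close>

lemma card_less_inj:
  fixes Z :: "real set"
  assumes "\<And>X. finite {y\<in>Z. y \<le> X}" "x \<in> Z" "x' \<in> Z"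
    and "card {y\<in>Z. y < x} = card {y\<in>Z. y < x'}"
  shows "x = x'"
proof -
  have False if "a \<in> Z" "a < b" "card {y\<in>Z. y < a} = card {y\<in>Z. y < b}" for a b
  proof -
    have "finite {y\<in>Z. y < b}" using assms(1)[of b] by (rule finite_subset[rotated]) auto
    moreover have "{y\<in>Z. y < a} \<subset> {y\<in>Z. y < b}" using that by auto
    ultimately have "card {y\<in>Z. y < a} < card {y\<in>Z. y < b}" by (intro psubset_card_mono)
    then show False using that by simp
  qed
  then show ?thesis using assms(2-4) by (metis linorder_neqE_linordered_idom)
qed

lemma ex_card_less:
  fixes Z :: "real set"
  assumes fin: "\<And>X. finite {y\<in>Z. y \<le> X}" and unbounded: "\<And>X. \<exists>z\<in>Z. X \<le> z"
  shows "\<exists>x\<in>Z. card {y\<in>Z. y < x} = n"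
proof (induction n)
  case 0
  obtain z where "z \<in> Z" using unbounded by blast
  define S where "S = {y\<in>Z. y \<le> z}"
  have S: "finite S" "S \<noteq> {}" unfolding S_def using fin \<open>z \<in> Z\<close> by auto
  have "{y\<in>Z. y < Min S} = {}"
    using Min_le[OF S(1)] Min_in[OF S] unfolding S_def by fastforce
  moreover have "Min S \<in> Z" using Min_in[OF S] unfolding S_def by blast
  ultimately show ?case by (metis card.empty)
next
  case (Suc n)
  then obtain x where x: "x \<in> Z" "card {y\<in>Z. y < x} = n" by blast
  obtain z where z: "z \<in> Z" "x < z" using unbounded[of "x + 1"] by force
  define S where "S = {y\<in>Z. x < y \<and> y \<le> z}"
  have "finite S" unfolding S_def by (rule finite_subset[OF _ fin[of z]]) auto
  moreover have "S \<noteq> {}" using z unfolding S_def by auto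
  ultimately have S: "finite S" "S \<noteq> {}" by blast+
  have "{y\<in>Z. y < Min S} = insert x {y\<in>Z. y < x}"
    using Min_le[OF S(1)] Min_in[OF S] x(1) unfolding S_def by fastforce
  moreover have "finite {y\<in>Z. y < x}" using fin[of x] by (rule finite_subset[rotated]) auto
  ultimately have "card {y\<in>Z. y < Min S} = Suc n" using x by simp
  moreover have "Min S \<in> Z" using Min_in[OF S] unfolding S_def by blast
  ultimately show ?case by blast
qed

lemma bessel_zero_spec:
  assumes "\<bar>mu\<bar> \<le> 1/2"
  shows "0 < bessel_zero mu n" "bessel_J mu (bessel_zero mu n) = 0"
    and "card {y. 0 < y \<and> y < bessel_zero mu n \<and> bessel_J mu y = 0} = n - 1"
proof -
  define Z where "Z = {y. 0 < y \<and> bessel_J mu y = 0}"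
  have below: "{y. 0 < y \<and> y < x \<and> bessel_J mu y = 0} = {y\<in>Z. y < x}" for x
    unfolding Z_def by auto
  have fin: "finite {y\<in>Z. y \<le> X}" for X
    using finite_bessel_J_zeros[OF assms, of X] unfolding Z_def by (simp add: conj_ac)
  have "\<exists>z\<in>Z. X \<le> z" for X
  proof -
    have "0 < max X 1" by simp
    from bessel_J_zero_in_pi_interval[OF assms this]
    obtain s where "s \<in> {max X 1..max X 1 + pi}" "bessel_J mu s = 0" by blast
    then show ?thesis unfolding Z_def by (intro bexI[of _ s]) auto
  qed
  then obtain x where x: "x \<in> Z" "card {y\<in>Z. y < x} = n - 1"
    using ex_card_less[OF fin] by blast
  have "\<exists>!x. 0 < x \<and> bessel_J mu x = 0 \<and> card {y. 0 < y \<and> y < x \<and> bessel_J mu y = 0} = n - 1"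
  proof (rule ex1I[of _ x])
    show "0 < x \<and> bessel_J mu x = 0 \<and> card {y. 0 < y \<and> y < x \<and> bessel_J mu y = 0} = n - 1"
      using x unfolding below by (simp add: Z_def)
    fix x' assume "0 < x' \<and> bessel_J mu x' = 0 \<and> card {y. 0 < y \<and> y < x' \<and> bessel_J mu y = 0} = n - 1"
    then have "x' \<in> Z" "card {y\<in>Z. y < x'} = card {y\<in>Z. y < x}"
      using x unfolding below by (simp_all add: Z_def)
    then show "x' = x" using card_less_inj[OF fin _ x(1)] by blast
  qed
  then have "0 < bessel_zero mu n \<and> bessel_J mu (bessel_zero mu n) = 0 \<and>
      card {y. 0 < y \<and> y < bessel_zero mu n \<and> bessel_J mu y = 0} = n - 1"
    unfolding bessel_zero_def by (rule theI')
  then show "0 < bessel_zero mu n" "bessel_J mu (bessel_zero mu n) = 0"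
    "card {y. 0 < y \<and> y < bessel_zero mu n \<and> bessel_J mu y = 0} = n - 1"
    by auto
qed

lemma filterlim_bessel_zero:
  assumes "\<bar>mu\<bar> \<le> 1/2"
  shows "filterlim (bessel_zero mu) at_top sequentially"
  unfolding filterlim_at_top
proof
  fix C
  define N where "N = {n. 1 \<le> n \<and> bessel_zero mu n < C}"
  have "inj_on (bessel_zero mu) N"
  proof (rule inj_onI)
    fix n n' assume "n \<in> N" "n' \<in> N" "bessel_zero mu n = bessel_zero mu n'"
    then show "n = n'" using bessel_zero_spec(3)[OF assms, of n] bessel_zero_spec(3)[OF assms, of n']
      unfolding N_def by (simp, linarith)
  qed
  moreover have "bessel_zero mu ` N \<subseteq> {s. 0 < s \<and> s \<le> C \<and> bessel_J mu s = 0}"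
    using bessel_zero_spec(1,2)[OF assms] unfolding N_def by auto
  ultimately have "finite N"
    using finite_subset[OF _ finite_bessel_J_zeros[OF assms]] finite_imageD by blast
  moreover have "{n. \<not> C \<le> bessel_zero mu n} \<subseteq> insert 0 N"
    unfolding N_def by auto
  ultimately have "finite {n. \<not> C \<le> bessel_zero mu n}"
    using finite_subset by blast
  then show "eventually (\<lambda>n. C \<le> bessel_zero mu n) sequentially"
    by (simp add: cofinite_eq_sequentially[symmetric] eventually_cofinite)
qed

section \<open>An energy estimate for \<open>(x\<^sup>\<alpha> w')' = -k\<^sup>2 w\<close>\<close>

locale weighted_oscillator =
  fixes w v :: "real \<Rightarrow> real" and \<alpha> k :: real
  assumes alpha_nonneg: "0 \<le> \<alpha>" and k_pos: "0 < k"
    and w_deriv: "\<And>x. x > 0 \<Longrightarrow> (w has_real_derivative v x / x powr \<alpha>) (at x)"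
    and v_deriv: "\<And>x. x > 0 \<Longrightarrow> (v has_real_derivative - (k^2 * w x)) (at x)"
    and w_1: "w 1 = 0"
begin

lemma energy_lower:
  assumes "0 < x" "x \<le> 1"
  shows "(v 1)^2 \<le> (v x)^2 / x powr \<alpha> + k^2 * (w x)^2"
proof -
  define E where "E = (\<lambda>x. (v x)^2 / x powr \<alpha> + k^2 * (w x)^2)"
  have "E 1 \<le> E x"
  proof (rule DERIV_nonpos_imp_nonincreasing[of x 1 E])
    fix y assume "x \<le> y" "y \<le> 1"
    then have y: "y > 0" using assms by simp
    have "(2 * (- (k^2 * w y) * v y) * y powr \<alpha> - (v y)^2 * (\<alpha> * y powr (\<alpha> - 1)))
          / (y powr \<alpha> * y powr \<alpha>) + k^2 * (2 * (v y / y powr \<alpha> * w y))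
        = - \<alpha> * y powr (\<alpha> - 1) * (v y)^2 / (y powr \<alpha>)^2"
      using y by (simp add: field_simps power2_eq_square)
    then have "(E has_real_derivative - \<alpha> * y powr (\<alpha> - 1) * (v y)^2 / (y powr \<alpha>)^2) (at y)"
      unfolding E_def using y
      by (intro DERIV_cong[OF DERIV_add[OF DERIV_divide[OF DERIV_power[OF v_deriv[OF y]]
            has_real_derivative_powr[OF y]] DERIV_cmult[OF DERIV_power[OF w_deriv[OF y]]]]])
         (simp_all add: mult_ac)
    moreover have "- \<alpha> * y powr (\<alpha> - 1) * (v y)^2 / (y powr \<alpha>)^2 \<le> 0"
      using alpha_nonneg by (simp add: divide_nonpos_nonneg mult_nonpos_nonneg)
    ultimately show "\<exists>d. (E has_real_derivative d) (at y) \<and> d \<le> 0" by blast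
  qed (use assms in simp)
  then show ?thesis unfolding E_def using w_1 by simp
qed

lemma energy_upper:
  assumes "0 < x" "x \<le> 1"
  shows "(v x)^2 + k^2 * x powr \<alpha> * (w x)^2 \<le> (v 1)^2"
proof -
  define E where "E = (\<lambda>x. (v x)^2 + k^2 * x powr \<alpha> * (w x)^2)"
  have "E x \<le> E 1"
  proof (rule DERIV_nonneg_imp_nondecreasing[of x 1 E])
    fix y assume "x \<le> y" "y \<le> 1"
    then have y: "y > 0" using assms by simp
    have "2 * (- (k^2 * w y) * v y) + (k^2 * (\<alpha> * y powr (\<alpha> - 1)) * (w y)^2
          + k^2 * y powr \<alpha> * (2 * (v y / y powr \<alpha> * w y)))
        = k^2 * \<alpha> * y powr (\<alpha> - 1) * (w y)^2"
      using y by (simp add: field_simps power2_eq_square)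
    then have "(E has_real_derivative k^2 * \<alpha> * y powr (\<alpha> - 1) * (w y)^2) (at y)"
      unfolding E_def
      by (intro DERIV_cong[OF DERIV_add[OF DERIV_power[OF v_deriv[OF y]]
            DERIV_mult[OF DERIV_cmult[OF has_real_derivative_powr[OF y]] DERIV_power[OF w_deriv[OF y]]]]])
         (simp add: mult_ac)
    moreover have "0 \<le> k^2 * \<alpha> * y powr (\<alpha> - 1) * (w y)^2"
      using alpha_nonneg by simp
    ultimately show "\<exists>d. (E has_real_derivative d) (at y) \<and> 0 \<le> d" by blast
  qed (use assms in simp)
  then show ?thesis unfolding E_def using w_1 by simp
qed

lemma product_bound:
  assumes "0 < a" "a \<le> x" "x \<le> 1"
  shows "2 * k * sqrt (a powr \<alpha>) * \<bar>w x * v x\<bar> \<le> (v 1)^2"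
proof -
  define r where "r = k * sqrt (x powr \<alpha>)"
  have "k * sqrt (a powr \<alpha>) \<le> r"
    unfolding r_def using assms alpha_nonneg k_pos
    by (intro mult_left_mono real_sqrt_le_mono powr_mono2) auto
  then have "2 * k * sqrt (a powr \<alpha>) * \<bar>w x * v x\<bar> \<le> 2 * r * \<bar>w x * v x\<bar>"
    by (intro mult_right_mono) auto
  also have "\<dots> \<le> (v x)^2 + r^2 * (w x)^2"
    using sum_squares_ge_zero[of "\<bar>v x\<bar> - r * \<bar>w x\<bar>" 0]
    by (simp add: power2_eq_square algebra_simps abs_mult)
  also have "\<dots> = (v x)^2 + k^2 * x powr \<alpha> * (w x)^2"
    unfolding r_def using assms by (simp add: power_mult_distrib)
  also have "\<dots> \<le> (v 1)^2" using energy_upper assms by simp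
  finally show ?thesis .
qed

lemma integral_lower_bound:
  assumes "0 < a" "a < b" "b \<le> 1"
  shows "(v 1)^2 * (b - a) - (v 1)^2 / (k * sqrt (a powr \<alpha>))
           \<le> 2 * k^2 * integral {a..b} (\<lambda>x. (w x)^2)"
proof -
  define E where "E = (\<lambda>x. (v x)^2 / x powr \<alpha> + k^2 * (w x)^2)"
  have ftc: "((\<lambda>x. (v x)^2 / x powr \<alpha> - k^2 * (w x)^2) has_integral w b * v b - w a * v a) {a..b}"
  proof (rule fundamental_theorem_of_calculus)
    fix x assume "x \<in> {a..b}"
    then have x: "x > 0" using assms by simp
    have "((\<lambda>x. w x * v x) has_real_derivative (v x)^2 / x powr \<alpha> - k^2 * (w x)^2) (at x)"
      by (rule DERIV_cong[OF DERIV_mult[OF w_deriv[OF x] v_deriv[OF x]]])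
         (simp add: power2_eq_square algebra_simps)
    then show "((\<lambda>x. w x * v x) has_vector_derivative (v x)^2 / x powr \<alpha> - k^2 * (w x)^2)
        (at x within {a..b})"
      by (simp add: has_real_derivative_iff_has_vector_derivative[symmetric] has_field_derivative_at_within)
  qed (use assms in simp)
  have E_integral: "(E has_integral integral {a..b} E) {a..b}"
    using assms unfolding E_def
    by (intro integrable_integral integrable_continuous_interval continuous_at_imp_continuous_on ballI
        isCont_add isCont_divide isCont_mult isCont_power DERIV_isCont[OF v_deriv]
        DERIV_isCont[OF w_deriv] continuous_intros) auto
  have "((\<lambda>x. (E x - ((v x)^2 / x powr \<alpha> - k^2 * (w x)^2)) / 2) has_integral
      (integral {a..b} E - (w b * v b - w a * v a)) / 2) {a..b}"
    by (rule has_integral_divide[OF has_integral_diff[OF E_integral ftc]])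
  moreover have "(\<lambda>x. (E x - ((v x)^2 / x powr \<alpha> - k^2 * (w x)^2)) / 2) = (\<lambda>x. k^2 * (w x)^2)"
    unfolding E_def by auto
  ultimately have "((\<lambda>x. k^2 * (w x)^2) has_integral
      (integral {a..b} E - (w b * v b - w a * v a)) / 2) {a..b}"
    by simp
  then have "integral {a..b} (\<lambda>x. k^2 * (w x)^2) = (integral {a..b} E - (w b * v b - w a * v a)) / 2"
    by (rule integral_unique)
  then have split:
    "2 * k^2 * integral {a..b} (\<lambda>x. (w x)^2) = integral {a..b} E - (w b * v b - w a * v a)"
    by simp
  have "(v 1)^2 * (b - a) \<le> integral {a..b} E"
    using has_integral_le[OF has_integral_const_real E_integral, of "(v 1)^2"]
      energy_lower assms unfolding E_def by (auto simp: mult.commute)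
  moreover have "w b * v b - w a * v a \<le> (v 1)^2 / (k * sqrt (a powr \<alpha>))"
  proof -
    define c where "c = k * sqrt (a powr \<alpha>)"
    have c: "c > 0" unfolding c_def using k_pos assms by simp
    have bound: "\<bar>w x * v x\<bar> \<le> (v 1)^2 / (2 * c)" if "x \<in> {a, b}" for x
      using product_bound[of a x] that assms c unfolding c_def
      by (auto simp: pos_le_divide_eq mult_ac)
    have "(v 1)^2 / (2 * c) + (v 1)^2 / (2 * c) = (v 1)^2 / c" by simp
    then have "w b * v b - w a * v a \<le> (v 1)^2 / c"
      using abs_le_D1[OF bound[of b, simplified]] abs_le_D2[OF bound[of a, simplified]] by linarith
    then show ?thesis unfolding c_def .
  qed
  ultimately show ?thesis using split by linarith
qed


lemma integral_pos:
  assumes "v 1 \<noteq> 0" "0 < a" "a < b" "b \<le> 1"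
  shows "0 < integral {a..b} (\<lambda>x. (w x)^2)"
proof -
  have cont: "continuous_on {a..b} (\<lambda>x. (w x)^2)"
    using assms by (intro continuous_on_power continuous_at_imp_continuous_on ballI
        DERIV_isCont[OF w_deriv]) auto
  have "integral {a..b} (\<lambda>x. (w x)^2) \<noteq> 0"
  proof
    assume "integral {a..b} (\<lambda>x. (w x)^2) = 0"
    then have zero: "w y = 0" if "y \<in> {a..b}" for y
      using integral_eq_0_iff[OF cont assms(3)] that by simp
    define x where "x = (a + b) / 2"
    have x: "a < x" "x < b" "0 < x" "x \<le> 1" using assms unfolding x_def by auto
    \<comment> \<open>\<open>w\<close> vanishes near \<open>x\<close>, hence so does \<open>v = x\<^sup>\<alpha> w'\<close>,
      and then the energy at \<open>x\<close> is \<open>0\<close>\<close>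
    have "(w has_real_derivative 0) (at x)"
      using x zero by (intro has_field_derivative_transform_within_open[OF DERIV_const, where S = "{a<..<b}"])
        auto
    with w_deriv[OF x(3)] have "v x / x powr \<alpha> = 0" by (rule DERIV_unique)
    then have "(v 1)^2 \<le> 0"
      using energy_lower[OF x(3,4)] zero[of x] x by simp
    then show False using assms(1) by simp
  qed
  moreover have "0 \<le> integral {a..b} (\<lambda>x. (w x)^2)"
    by (rule integral_nonneg[OF integrable_continuous_interval[OF cont]]) simp
  ultimately show ?thesis by simp
qed

end

section \<open>The eigenfunctions\<close>

lemma bessel_substitution_derivs:
  fixes be ka j x :: real
  assumes "mu > -1" "j > 0" "x > 0"
  defines "s \<equiv> j * x powr ka"
  shows "((\<lambda>x. x powr be * bessel_J mu (j * x powr ka)) has_real_derivative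
           x powr (be - 1) * (be * bessel_J mu s + ka * (s * deriv (bessel_J mu) s))) (at x)"
    and "((\<lambda>x. x powr (- be) * (be * bessel_J mu (j * x powr ka)
             + ka * (j * x powr ka * deriv (bessel_J mu) (j * x powr ka)))) has_real_derivative
           x powr (- be - 1) * ((ka^2 * mu^2 - be^2 - ka^2 * s^2) * bessel_J mu s)) (at x)"
proof -
  have s: "s > 0" unfolding s_def using assms by simp
  have "((\<lambda>x. j * x powr ka) has_real_derivative j * (ka * x powr (ka - 1))) (at x)"
    by (rule DERIV_cmult[OF has_real_derivative_powr[OF assms(3)]])
  moreover have "j * (ka * x powr (ka - 1)) = ka * s / x"
    unfolding s_def using assms(3) by (simp add: powr_diff)
  ultimately have ds: "((\<lambda>x. j * x powr ka) has_real_derivative ka * s / x) (at x)" by simp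
  have dJ: "((\<lambda>x. bessel_J mu (j * x powr ka)) has_real_derivative
      deriv (bessel_J mu) s * (ka * s / x)) (at x)"
    using DERIV_chain2[OF has_real_derivative_bessel_J[OF assms(1) s, unfolded s_def] ds] unfolding s_def .
  have dP: "((\<lambda>x. j * x powr ka * deriv (bessel_J mu) (j * x powr ka)) has_real_derivative
      (mu^2 / s - s) * bessel_J mu s * (ka * s / x)) (at x)"
    using DERIV_chain2[OF bessel_equation[OF assms(1) s, unfolded s_def] ds] unfolding s_def .
  have x_be: "x powr be = x powr (be - 1) * x" "x powr (- be) = x powr (- be - 1) * x"
    using assms(3) by (simp_all add: powr_diff)
  show "((\<lambda>x. x powr be * bessel_J mu (j * x powr ka)) has_real_derivative
           x powr (be - 1) * (be * bessel_J mu s + ka * (s * deriv (bessel_J mu) s))) (at x)"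
    using assms(3)
    by (intro DERIV_cong[OF DERIV_mult[OF has_real_derivative_powr[OF assms(3)] dJ]])
       (simp add: x_be field_simps s_def)
  show "((\<lambda>x. x powr (- be) * (be * bessel_J mu (j * x powr ka)
             + ka * (j * x powr ka * deriv (bessel_J mu) (j * x powr ka)))) has_real_derivative
           x powr (- be - 1) * ((ka^2 * mu^2 - be^2 - ka^2 * s^2) * bessel_J mu s)) (at x)"
    using assms(2,3) s
    by (intro DERIV_cong[OF DERIV_mult[OF has_real_derivative_powr[OF assms(3)]
          DERIV_add[OF DERIV_cmult[OF dJ] DERIV_cmult[OF dP]]]])
       (simp add: x_be field_simps power2_eq_square s_def)
qed


lemma kappa_nu_alpha:
  assumes "0 \<le> \<alpha>" "\<alpha> < 1"
  shows "0 < kappa_alpha \<alpha>" "0 \<le> nu_alpha \<alpha>" "nu_alpha \<alpha> \<le> 1/2"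
    and "kappa_alpha \<alpha> * nu_alpha \<alpha> = (1 - \<alpha>) / 2"
  using assms by (auto simp: kappa_alpha_def nu_alpha_def field_simps)

lemma bessel_weighted_oscillator:
  assumes "0 \<le> \<alpha>" "\<alpha> < 1" "\<bar>mu\<bar> = nu_alpha \<alpha>" "j > 0" "bessel_J mu j = 0"
  shows "weighted_oscillator (\<lambda>x. x powr ((1 - \<alpha>) / 2) * bessel_J mu (j * x powr kappa_alpha \<alpha>))
      (\<lambda>x. x powr (- ((1 - \<alpha>) / 2)) * ((1 - \<alpha>) / 2 * bessel_J mu (j * x powr kappa_alpha \<alpha>)
         + kappa_alpha \<alpha> * (j * x powr kappa_alpha \<alpha> * deriv (bessel_J mu) (j * x powr kappa_alpha \<alpha>))))
      \<alpha> (kappa_alpha \<alpha> * j)"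
proof unfold_locales
  define be ka where "be = (1 - \<alpha>) / 2" and "ka = kappa_alpha \<alpha>"
  note \<kappa>\<nu> = kappa_nu_alpha[OF assms(1,2), folded ka_def]
  have mu: "mu > -1" using \<kappa>\<nu>(3) assms(3) by linarith
  show "0 \<le> \<alpha>" "0 < kappa_alpha \<alpha> * j" using assms \<kappa>\<nu>(1) unfolding ka_def by simp_all
  show "1 powr ((1 - \<alpha>) / 2) * bessel_J mu (j * 1 powr kappa_alpha \<alpha>) = 0" using assms(5) by simp
  fix x :: real assume x: "x > 0"
  note d = bessel_substitution_derivs[OF mu assms(4) x, of be ka, folded ka_def be_def]
  have "be - 1 = - be - \<alpha>" unfolding be_def by (simp add: field_simps)
  then have "x powr (be - 1) = x powr (- be - \<alpha>)" by (rule arg_cong)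
  also have "\<dots> = x powr (- be) / x powr \<alpha>" by (rule powr_diff)
  finally have "x powr (be - 1) = x powr (- be) / x powr \<alpha>" .
  with d(1) show "((\<lambda>x. x powr ((1 - \<alpha>) / 2) * bessel_J mu (j * x powr kappa_alpha \<alpha>)) has_real_derivative
      x powr (- ((1 - \<alpha>) / 2)) * ((1 - \<alpha>) / 2 * bessel_J mu (j * x powr kappa_alpha \<alpha>)
        + kappa_alpha \<alpha> * (j * x powr kappa_alpha \<alpha> * deriv (bessel_J mu) (j * x powr kappa_alpha \<alpha>)))
      / x powr \<alpha>) (at x)"
    unfolding be_def ka_def by (simp add: mult_ac)
  have "(ka * \<bar>mu\<bar>)^2 = be^2" unfolding assms(3) \<kappa>\<nu>(4) be_def ..
  then have mu_be: "ka^2 * mu^2 = be^2" by (simp add: power_mult_distrib)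
  have "- be - 1 + (ka + ka) = be" unfolding be_def ka_def kappa_alpha_def by (simp add: field_simps)
  then have "x powr (- be - 1) * (x powr ka * x powr ka) = x powr be"
    by (simp only: powr_add[symmetric] add.assoc)
  then have "x powr (- be - 1) * ((ka^2 * mu^2 - be^2 - ka^2 * (j * x powr ka)^2)
        * bessel_J mu (j * x powr ka))
      = - ((ka * j)^2 * (x powr be * bessel_J mu (j * x powr ka)))"
    unfolding mu_be by (simp add: power2_eq_square)
  with d(2) show "((\<lambda>x. x powr (- ((1 - \<alpha>) / 2)) * ((1 - \<alpha>) / 2 * bessel_J mu (j * x powr kappa_alpha \<alpha>)
        + kappa_alpha \<alpha> * (j * x powr kappa_alpha \<alpha> * deriv (bessel_J mu) (j * x powr kappa_alpha \<alpha>))))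
      has_real_derivative - ((kappa_alpha \<alpha> * j)^2 *
        (x powr ((1 - \<alpha>) / 2) * bessel_J mu (j * x powr kappa_alpha \<alpha>)))) (at x)"
    unfolding be_def ka_def by simp
qed

definition bessel_eigenfunction :: "real \<Rightarrow> real \<Rightarrow> nat \<Rightarrow> real \<Rightarrow> real" where
  "bessel_eigenfunction \<alpha> mu n x =
     sqrt (kappa_alpha \<alpha>) / \<bar>deriv (bessel_J mu) (bessel_zero mu n)\<bar> *
     (x powr ((1 - \<alpha>) / 2) * bessel_J mu (bessel_zero mu n * x powr kappa_alpha \<alpha>))"

lemma Phi_tilde_eq_bessel_eigenfunction:
  assumes "x > 0"
  shows "Phi_tilde \<alpha> m x = (if odd m then bessel_eigenfunction \<alpha> (- nu_alpha \<alpha>) ((m + 1) div 2) x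
                             else bessel_eigenfunction \<alpha> (nu_alpha \<alpha>) (m div 2) x)"
  using assms
  by (simp add: Phi_tilde_def Phi_o_def Phi_e_def bessel_eigenfunction_def Let_def)

lemma integral_bessel_eigenfunction:
  assumes "0 \<le> \<alpha>" "\<alpha> < 1" "\<bar>mu\<bar> = nu_alpha \<alpha>" "0 < a" "a < b" "b \<le> 1"
  shows "0 < integral {a..b} (\<lambda>x. (bessel_eigenfunction \<alpha> mu n x)^2)"
    and "kappa_alpha \<alpha> / 2 * ((b - a) - 1 / (kappa_alpha \<alpha> * bessel_zero mu n * sqrt (a powr \<alpha>)))
           \<le> integral {a..b} (\<lambda>x. (bessel_eigenfunction \<alpha> mu n x)^2)"
proof -
  define ka j where "ka = kappa_alpha \<alpha>" and "j = bessel_zero mu n"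
  define J' where "J' = deriv (bessel_J mu) j"
  define w where "w = (\<lambda>x. x powr ((1 - \<alpha>) / 2) * bessel_J mu (j * x powr ka))"
  define v where "v = (\<lambda>x. x powr (- ((1 - \<alpha>) / 2)) * ((1 - \<alpha>) / 2 * bessel_J mu (j * x powr ka)
         + ka * (j * x powr ka * deriv (bessel_J mu) (j * x powr ka))))"
  note \<kappa>\<nu> = kappa_nu_alpha[OF assms(1,2), folded ka_def]
  have mu: "\<bar>mu\<bar> \<le> 1/2" using \<kappa>\<nu>(3) assms(3) by simp
  have j: "0 < j" "bessel_J mu j = 0" unfolding j_def using bessel_zero_spec[OF mu] by simp_all
  have J': "J' \<noteq> 0" unfolding J'_def by (rule bessel_J_zero_imp_deriv_nonzero[OF mu j])
  interpret osc: weighted_oscillator w v \<alpha> "ka * j"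
    unfolding w_def v_def ka_def by (rule bessel_weighted_oscillator[OF assms(1-3) j])
  have v1: "v 1 = ka * j * J'" unfolding v_def J'_def using j by simp
  have "bessel_eigenfunction \<alpha> mu n x = sqrt ka / \<bar>J'\<bar> * w x" for x
    unfolding bessel_eigenfunction_def w_def J'_def j_def ka_def ..
  then have "(\<lambda>x. (bessel_eigenfunction \<alpha> mu n x)^2) = (\<lambda>x. ka / J'^2 * (w x)^2)"
    using \<kappa>\<nu>(1) by (simp add: power_mult_distrib power_divide)
  then have I: "integral {a..b} (\<lambda>x. (bessel_eigenfunction \<alpha> mu n x)^2)
      = ka / J'^2 * integral {a..b} (\<lambda>x. (w x)^2)" by simp
  have C: "0 < ka / J'^2" using \<kappa>\<nu>(1) J' by simp
  show "0 < integral {a..b} (\<lambda>x. (bessel_eigenfunction \<alpha> mu n x)^2)"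
    unfolding I using osc.integral_pos[of a b] v1 \<kappa>\<nu>(1) j J' assms C by simp
  define R where "R = (b - a) - 1 / (ka * j * sqrt (a powr \<alpha>))"
  have "(ka * j)^2 * (J'^2 * R) \<le> (ka * j)^2 * (2 * integral {a..b} (\<lambda>x. (w x)^2))"
    using osc.integral_lower_bound[OF assms(4-6)] unfolding v1 R_def
    by (simp add: power_mult_distrib algebra_simps)
  then have "J'^2 * R \<le> 2 * integral {a..b} (\<lambda>x. (w x)^2)"
    using \<kappa>\<nu>(1) j by (simp add: mult_le_cancel_left_pos)
  then have "ka / J'^2 / 2 * (J'^2 * R) \<le> ka / J'^2 / 2 * (2 * integral {a..b} (\<lambda>x. (w x)^2))"
    using C by (intro mult_left_mono) auto
  then show "kappa_alpha \<alpha> / 2 * ((b - a) - 1 / (kappa_alpha \<alpha> * bessel_zero mu n * sqrt (a powr \<alpha>)))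
      \<le> integral {a..b} (\<lambda>x. (bessel_eigenfunction \<alpha> mu n x)^2)"
    unfolding I using J' by (simp add: R_def ka_def j_def)
qed

lemma eventually_integral_bessel_eigenfunction_ge:
  assumes "0 \<le> \<alpha>" "\<alpha> < 1" "\<bar>mu\<bar> = nu_alpha \<alpha>" "0 < a" "a < b" "b \<le> 1"
  shows "eventually (\<lambda>n. kappa_alpha \<alpha> * (b - a) / 4
           \<le> integral {a..b} (\<lambda>x. (bessel_eigenfunction \<alpha> mu n x)^2)) sequentially"
proof -
  define c where "c = kappa_alpha \<alpha> * sqrt (a powr \<alpha>)"
  note \<kappa>\<nu> = kappa_nu_alpha[OF assms(1,2)]
  have c: "c > 0" unfolding c_def using \<kappa>\<nu>(1) assms(4) by simp
  have mu: "\<bar>mu\<bar> \<le> 1/2" using \<kappa>\<nu>(3) assms(3) by simp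
  have "eventually (\<lambda>n. 2 / (c * (b - a)) \<le> bessel_zero mu n) sequentially"
    using filterlim_bessel_zero[OF mu] by (simp add: filterlim_at_top)
  then show ?thesis
  proof eventually_elim
    case (elim n)
    define j where "j = bessel_zero mu n"
    have "0 < j" unfolding j_def by (rule bessel_zero_spec(1)[OF mu])
    have "2 \<le> j * (c * (b - a))" using elim c assms(5) unfolding j_def by (simp add: field_simps)
    then have "1 / (c * j) \<le> (b - a) / 2" using c \<open>0 < j\<close> by (simp add: field_simps)
    then have "kappa_alpha \<alpha> / 2 * ((b - a) / 2) \<le> kappa_alpha \<alpha> / 2 * ((b - a) - 1 / (c * j))"
      using \<kappa>\<nu>(1) by (intro mult_left_mono) auto
    then have "kappa_alpha \<alpha> * (b - a) / 4 \<le> kappa_alpha \<alpha> / 2 * ((b - a) - 1 / (c * j))"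
      by simp
    also have "\<dots> \<le> integral {a..b} (\<lambda>x. (bessel_eigenfunction \<alpha> mu n x)^2)"
      using integral_bessel_eigenfunction(2)[OF assms] unfolding c_def j_def by (simp add: mult_ac)
    finally show ?case .
  qed
qed

lemma uniform_lower_bound_if_eventually:
  fixes f :: "nat \<Rightarrow> real"
  assumes "\<And>m. 0 < f m" "eventually (\<lambda>m. B \<le> f m) sequentially" "0 < B"
  shows "\<exists>\<mu>>0. \<forall>m. \<mu> \<le> f m"
proof -
  obtain N where N: "\<And>m. N \<le> m \<Longrightarrow> B \<le> f m"
    using assms(2) by (auto simp: eventually_sequentially)
  define S where "S = insert B (f ` {..N})"
  have S: "finite S" "S \<noteq> {}" "\<forall>y\<in>S. 0 < y" unfolding S_def using assms by auto
  show ?thesis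
  proof (intro exI[of _ "Min S"] conjI allI)
    show "0 < Min S" using S Min_in by blast
    fix m show "Min S \<le> f m"
    proof (cases "m \<le> N")
      case True
      then show ?thesis using S(1) unfolding S_def by (intro Min_le) auto
    next
      case False
      then have "B \<le> f m" by (intro N) simp
      moreover have "Min S \<le> B" using S(1) unfolding S_def by (intro Min_le) auto
      ultimately show ?thesis by simp
    qed
  qed
qed

lemma eventually_sequentially_halves:
  assumes "eventually P sequentially"
  shows "eventually (\<lambda>m. P (m div 2) \<and> P ((m + 1) div 2)) sequentially"
proof -
  obtain N where "\<And>n. N \<le> n \<Longrightarrow> P n" using assms by (auto simp: eventually_sequentially)
  then show ?thesis
    unfolding eventually_sequentially by (intro exI[of _ "2 * N"]) auto
qed

lemma integral_Phi_tilde_square: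
  assumes "0 < a"
  shows "integral {a..b} (\<lambda>x. (Phi_tilde \<alpha> m x)\<^sup>2) =
    (if odd m then integral {a..b} (\<lambda>x. (bessel_eigenfunction \<alpha> (- nu_alpha \<alpha>) ((m + 1) div 2) x)^2)
     else integral {a..b} (\<lambda>x. (bessel_eigenfunction \<alpha> (nu_alpha \<alpha>) (m div 2) x)^2))"
  using assms
  by (cases "odd m") (auto intro!: integral_cong simp: Phi_tilde_eq_bessel_eigenfunction)

lemma integral_Phi_tilde_pos:
  assumes "0 \<le> \<alpha>" "\<alpha> < 1" "0 < a" "a < b" "b \<le> 1"
  shows "0 < integral {a..b} (\<lambda>x. (Phi_tilde \<alpha> m x)\<^sup>2)"
  using integral_bessel_eigenfunction(1)[OF assms(1,2) _ assms(3-5)] kappa_nu_alpha(2)[OF assms(1,2)]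
  unfolding integral_Phi_tilde_square[OF assms(3)] by simp

lemma eventually_integral_Phi_tilde_ge:
  assumes "0 \<le> \<alpha>" "\<alpha> < 1" "0 < a" "a < b" "b \<le> 1"
  shows "eventually (\<lambda>m. kappa_alpha \<alpha> * (b - a) / 4 \<le> integral {a..b} (\<lambda>x. (Phi_tilde \<alpha> m x)\<^sup>2))
           sequentially"
proof -
  have "\<bar>nu_alpha \<alpha>\<bar> = nu_alpha \<alpha>" "\<bar>- nu_alpha \<alpha>\<bar> = nu_alpha \<alpha>"
    using kappa_nu_alpha(2)[OF assms(1,2)] by simp_all
  then have "eventually (\<lambda>n.
      kappa_alpha \<alpha> * (b - a) / 4 \<le> integral {a..b} (\<lambda>x. (bessel_eigenfunction \<alpha> (nu_alpha \<alpha>) n x)^2) \<and>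
      kappa_alpha \<alpha> * (b - a) / 4 \<le> integral {a..b} (\<lambda>x. (bessel_eigenfunction \<alpha> (- nu_alpha \<alpha>) n x)^2))
      sequentially"
    by (intro eventually_conj eventually_integral_bessel_eigenfunction_ge[OF assms(1,2) _ assms(3-5)])
  from eventually_sequentially_halves[OF this] show ?thesis
    unfolding integral_Phi_tilde_square[OF assms(3)] by (rule eventually_mono) (simp only: if_split, blast)
qed

theorem lemma7p2:
  fixes \<alpha> a b :: real
  assumes "0 \<le> \<alpha>" "\<alpha> < 1" "0 < a" "a < b" "b < 1"
  shows "\<exists>\<mu>>0. \<forall>m::nat. m \<ge> 1 \<longrightarrow> integral {a..b} (\<lambda>x. (Phi_tilde \<alpha> m x)\<^sup>2) \<ge> \<mu>"
proof -
  have "b \<le> 1" using assms(5) by simp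
  note bounds = assms(1-4) this
  have "0 < kappa_alpha \<alpha> * (b - a) / 4"
    using kappa_nu_alpha(1)[OF assms(1,2)] assms(4) by simp
  with integral_Phi_tilde_pos[OF bounds] eventually_integral_Phi_tilde_ge[OF bounds]
  have "\<exists>\<mu>>0. \<forall>m. \<mu> \<le> integral {a..b} (\<lambda>x. (Phi_tilde \<alpha> m x)\<^sup>2)"
    by (intro uniform_lower_bound_if_eventually)
  then show ?thesis by auto
qed

end
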